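(* Let $P=\{(x,y)\in\mathbb{R}^{p+q}: Ax+Gy\le b\}$ be a rational polyhedron and let $\alpha x+\beta y\le\gamma$ (with $\alpha\in\mathbb{Q}^p$, $\beta\in\mathbb{Q}^q$ row vectors, $\gamma\in\mathbb{Q}$) be a cutting plane for $P$, i.e. an inequality that is valid for $P_I$ but not valid for $P$. Then there is a natural number $k\ge 2$ such that $\alpha x+\beta y\le\gamma$ is a $k$-disjunctive cut for $P$.
   Context: Notation: $A\in\mathbb{Q}^{m\times p}$, $G\in\mathbb{Q}^{m\times q}$, $b\in\mathbb{Q}^m$; $P_I=\mathrm{conv}\{(x,y)\in P: x\in\mathbb{Z}^p\}$ is the mixed integer hull. A $k$-disjunction ($k\ge 2$) is a family of $k$ inequalities $d^1x\le\delta^1,\dots,d^kx\le\delta^k$ with $d^i\in\mathbb{Z}^p$ (row vectors, not necessarily distinct) and $\delta^i\in\mathbb{Z}$ such that every $x\in\mathbb{Z}^p$ satisfies $d^ix\le\delta^i$ for at least one $i$. For a closed convex set $C\subseteq\mathbb{R}^{p+q}$, an inequality $\alpha x+\beta y\le\gamma$ is a $k$-disjunctive cut for $C$ if it is not valid for $C$ and there is a $k$-disjunction such that every $(x,y)\in C$ with $\alpha x+\beta y>\gamma$ satisfies $d^ix>\delta^i$ for all $i=1,\dots,k$. *)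

theory Defs
  imports "HOL-Analysis.Analysis"
begin

text \<open>Mixed integer setting: x ranges over real^'p (integer-constrained part),
  y over real^'q (continuous part); constraints indexed by 'm.
  A row vector alpha applied to x is the inner product alpha \<bullet> x.\<close>

definition polyhedron ::
  "real^'p^'m \<Rightarrow> real^'q^'m \<Rightarrow> real^'m \<Rightarrow> ((real^'p) \<times> (real^'q)) set" where
  "polyhedron A G b = {(x, y). \<forall>i. (A *v x) $ i + (G *v y) $ i \<le> b $ i}"

definition int_vec :: "real^'n \<Rightarrow> bool" where
  "int_vec x \<longleftrightarrow> (\<forall>j. x $ j \<in> \<int>)"

definition rat_vec :: "real^'n \<Rightarrow> bool" where
  "rat_vec x \<longleftrightarrow> (\<forall>j. x $ j \<in> \<rat>)"

definition rat_mat :: "real^'n^'m \<Rightarrow> bool" where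
  "rat_mat A \<longleftrightarrow> (\<forall>i j. A $ i $ j \<in> \<rat>)"

definition mixed_integer_hull ::
  "((real^'p) \<times> (real^'q)) set \<Rightarrow> ((real^'p) \<times> (real^'q)) set" where
  "mixed_integer_hull P = convex hull {(x, y) \<in> P. int_vec x}"

definition valid_ineq ::
  "((real^'p) \<times> (real^'q)) set \<Rightarrow> real^'p \<Rightarrow> real^'q \<Rightarrow> real \<Rightarrow> bool" where
  "valid_ineq C \<alpha> \<beta> \<gamma> \<longleftrightarrow> (\<forall>(x, y) \<in> C. \<alpha> \<bullet> x + \<beta> \<bullet> y \<le> \<gamma>)"

definition k_disjunction :: "nat \<Rightarrow> (nat \<Rightarrow> real^'p) \<Rightarrow> (nat \<Rightarrow> real) \<Rightarrow> bool" where
  "k_disjunction k d \<delta> \<longleftrightarrow>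
     2 \<le> k \<and> (\<forall>i<k. int_vec (d i) \<and> \<delta> i \<in> \<int>) \<and>
     (\<forall>x::real^'p. int_vec x \<longrightarrow> (\<exists>i<k. d i \<bullet> x \<le> \<delta> i))"

definition k_disjunctive_cut ::
  "nat \<Rightarrow> ((real^'p) \<times> (real^'q)) set \<Rightarrow> real^'p \<Rightarrow> real^'q \<Rightarrow> real \<Rightarrow> bool" where
  "k_disjunctive_cut k C \<alpha> \<beta> \<gamma> \<longleftrightarrow>
     \<not> valid_ineq C \<alpha> \<beta> \<gamma> \<and>
     (\<exists>d \<delta>. k_disjunction k d \<delta> \<and>
        (\<forall>(x, y) \<in> C. \<alpha> \<bullet> x + \<beta> \<bullet> y > \<gamma> \<longrightarrow> (\<forall>i<k. d i \<bullet> x > \<delta> i)))"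

end

theory Submission
  imports Defs
begin

(*
  Let Q be the projection onto the x-space of the set of points of P violating
  the cut, i.e. Q = {x. \<exists>y. (x,y) \<in> P \<and> \<alpha>x + \<beta>y > \<gamma>}.  Since the cut is valid for P_I,
  Q contains no integral point.  Q is described by a mixed system of strict and non-strict
  linear inequalities, so Fourier-Motzkin elimination of the y-variables describes Q by a
  finite system of such inequalities in x alone; rationality of the data is preserved.
  For each rational inequality a x \<le> c (or a x < c) of that system, scaling to integral data
  gives an integral inequality D x \<le> \<Delta> that fails at every solution of the original one
  and holds at every integral point violating it.  Every integral x violates some inequality
  of the system, so these inequalities D x \<le> \<Delta> form a disjunction, while every point of
  Q violates all of them; this is exactly the statement that the cut is disjunctive.
*)

section \<open>Linear constraints with a strictness flag\<close>

datatype ('p::finite, 'q::finite) lincon =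
  LinCon (xcoef: "real^'p") (ycoef: "real^'q") (rhs: real) (strict: bool)

definition lhs :: "('p::finite, 'q::finite) lincon \<Rightarrow> real^'p \<Rightarrow> real^'q \<Rightarrow> real" where
  "lhs r x y = xcoef r \<bullet> x + ycoef r \<bullet> y"

definition sat :: "('p::finite, 'q::finite) lincon \<Rightarrow> real^'p \<Rightarrow> real^'q \<Rightarrow> bool" where
  "sat r x y \<longleftrightarrow> lhs r x y \<le> rhs r \<and> (strict r \<longrightarrow> lhs r x y < rhs r)"

definition rational_con :: "('p::finite, 'q::finite) lincon \<Rightarrow> bool" where
  "rational_con r \<longleftrightarrow> rat_vec (xcoef r) \<and> rat_vec (ycoef r) \<and> rhs r \<in> \<rat>"

definition pos_comb ::
  "real \<Rightarrow> real \<Rightarrow> ('p::finite, 'q::finite) lincon \<Rightarrow> ('p, 'q) lincon \<Rightarrow> ('p, 'q) lincon" where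
  "pos_comb l m p n =
     LinCon (l *\<^sub>R xcoef p + m *\<^sub>R xcoef n) (l *\<^sub>R ycoef p + m *\<^sub>R ycoef n)
            (l * rhs p + m * rhs n) (strict p \<or> strict n)"

lemma pos_comb_simps [simp]:
  "xcoef (pos_comb l m p n) = l *\<^sub>R xcoef p + m *\<^sub>R xcoef n"
  "ycoef (pos_comb l m p n) = l *\<^sub>R ycoef p + m *\<^sub>R ycoef n"
  "rhs (pos_comb l m p n) = l * rhs p + m * rhs n"
  "strict (pos_comb l m p n) \<longleftrightarrow> strict p \<or> strict n"
  by (simp_all add: pos_comb_def)

lemma lhs_pos_comb [simp]: "lhs (pos_comb l m p n) x y = l * lhs p x y + m * lhs n x y"
  by (simp add: lhs_def inner_add_left algebra_simps)

lemma sat_pos_comb: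
  assumes "l > 0" "m > 0" "sat p x y" "sat n x y"
  shows "sat (pos_comb l m p n) x y"
proof -
  have "l * lhs p x y \<le> l * rhs p" "m * lhs n x y \<le> m * rhs n"
    using assms by (simp_all add: sat_def)
  moreover have "strict p \<Longrightarrow> l * lhs p x y < l * rhs p" "strict n \<Longrightarrow> m * lhs n x y < m * rhs n"
    using assms by (simp_all add: sat_def)
  ultimately show ?thesis by (auto simp: sat_def)
qed

lemma rat_vec_lin_comb:
  assumes "rat_vec a" "rat_vec b" "l \<in> \<rat>" "m \<in> \<rat>"
  shows "rat_vec (l *\<^sub>R a + m *\<^sub>R b)"
  using assms unfolding rat_vec_def by (auto intro: Rats_add Rats_mult)

lemma rational_pos_comb:
  assumes "rational_con p" "rational_con n" "l \<in> \<rat>" "m \<in> \<rat>"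
  shows "rational_con (pos_comb l m p n)"
  using assms by (simp add: rational_con_def rat_vec_lin_comb)

section \<open>One step of Fourier-Motzkin elimination\<close>

text \<open>Eliminating the coordinate \<open>y$j\<close>: keep the constraints not involving it and add the
  combination of every upper-bound constraint \<open>p\<close> with every lower-bound constraint \<open>n\<close>
  in which \<open>y$j\<close> cancels.\<close>
definition fm_comb :: "'q \<Rightarrow> ('p::finite, 'q::finite) lincon \<Rightarrow> ('p, 'q) lincon \<Rightarrow> ('p, 'q) lincon" where
  "fm_comb j p n = pos_comb (- ycoef n $ j) (ycoef p $ j) p n"

definition fm_elim :: "'q \<Rightarrow> ('p::finite, 'q::finite) lincon set \<Rightarrow> ('p, 'q) lincon set" where
  "fm_elim j S = {r \<in> S. ycoef r $ j = 0} \<union>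
     (\<lambda>(p, n). fm_comb j p n) ` {(p, n) \<in> S \<times> S. ycoef p $ j > 0 \<and> ycoef n $ j < 0}"

lemma finite_fm_elim:
  assumes "finite S"
  shows "finite (fm_elim j S)"
  unfolding fm_elim_def
proof (intro finite_UnI finite_imageI)
  show "finite {r \<in> S. ycoef r $ j = 0}" using assms by simp
  show "finite {(p, n) \<in> S \<times> S. ycoef p $ j > 0 \<and> ycoef n $ j < 0}"
    using assms by (auto intro: finite_subset[of _ "S \<times> S"])
qed

lemma rational_fm_elim:
  assumes "\<forall>r\<in>S. rational_con r"
  shows "\<forall>r\<in>fm_elim j S. rational_con r"
proof
  fix r assume "r \<in> fm_elim j S"
  then consider "r \<in> S" | p n where "r = fm_comb j p n" "p \<in> S" "n \<in> S"
    unfolding fm_elim_def by auto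
  then show "rational_con r"
  proof cases
    case 2
    then have "ycoef p $ j \<in> \<rat>" "ycoef n $ j \<in> \<rat>"
      using assms by (auto simp: rational_con_def rat_vec_def)
    then show ?thesis using 2 assms by (simp add: fm_comb_def rational_pos_comb)
  qed (use assms in blast)
qed

lemma ycoef_fm_elim:
  assumes "\<forall>r\<in>S. ycoef r $ i = 0 \<or> i = j" "r \<in> fm_elim j S"
  shows "ycoef r $ i = 0"
  using assms unfolding fm_elim_def fm_comb_def by (auto simp: algebra_simps)

lemma sat_fm_elim:
  assumes "\<forall>r\<in>S. sat r x y"
  shows "\<forall>r\<in>fm_elim j S. sat r x y"
  using assms unfolding fm_elim_def fm_comb_def by (auto intro: sat_pos_comb)

definition shift :: "real^'q::finite \<Rightarrow> 'q \<Rightarrow> real \<Rightarrow> real^'q" where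
  "shift y j t = y + (t - y $ j) *\<^sub>R axis j 1"

lemma lhs_shift: "lhs r x (shift y j t) = lhs r x y + (t - y $ j) * ycoef r $ j"
  by (simp add: lhs_def shift_def inner_add_right inner_axis)

text \<open>For fixed \<open>x\<close> and the other coordinates of \<open>y\<close>, a constraint with nonzero coefficient
  at \<open>j\<close> bounds \<open>y$j\<close> by this value, from above if the coefficient is positive and from
  below if it is negative.\<close>
definition bound :: "('p::finite, 'q::finite) lincon \<Rightarrow> real^'p \<Rightarrow> real^'q \<Rightarrow> 'q \<Rightarrow> real" where
  "bound r x y j = y $ j + (rhs r - lhs r x y) / ycoef r $ j"

lemma sat_shift_upper:
  assumes "ycoef r $ j > 0"
  shows "sat r x (shift y j t) \<longleftrightarrow> t \<le> bound r x y j \<and> (strict r \<longrightarrow> t < bound r x y j)"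
  using assms by (simp add: sat_def lhs_shift bound_def field_simps)

lemma sat_shift_lower:
  assumes "ycoef r $ j < 0"
  shows "sat r x (shift y j t) \<longleftrightarrow> bound r x y j \<le> t \<and> (strict r \<longrightarrow> bound r x y j < t)"
  using assms by (simp add: sat_def lhs_shift bound_def field_simps)

lemma sat_shift_free: "ycoef r $ j = 0 \<Longrightarrow> sat r x (shift y j t) \<longleftrightarrow> sat r x y"
  by (simp add: sat_def lhs_shift)

lemma fm_comb_bounds:
  assumes "ycoef p $ j > 0" "ycoef n $ j < 0" "sat (fm_comb j p n) x y"
  shows "bound n x y j \<le> bound p x y j \<and>
         (strict n \<or> strict p \<longrightarrow> bound n x y j < bound p x y j)"
proof -
  let ?gp = "ycoef p $ j" and ?gn = "ycoef n $ j"
  have "- ?gn * lhs p x y + ?gp * lhs n x y \<le> - ?gn * rhs p + ?gp * rhs n"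
    "strict p \<or> strict n \<Longrightarrow> - ?gn * lhs p x y + ?gp * lhs n x y < - ?gn * rhs p + ?gp * rhs n"
    using assms(3) unfolding fm_comb_def sat_def by simp_all
  then show ?thesis using assms(1,2) by (auto simp: bound_def field_simps)
qed

lemma interval_choice:
  fixes lo :: "'a \<Rightarrow> real" and up :: "'b \<Rightarrow> real"
  assumes "finite I" "finite K"
    and compat: "\<And>i k. i \<in> I \<Longrightarrow> k \<in> K \<Longrightarrow> lo i \<le> up k \<and> (sl i \<or> su k \<longrightarrow> lo i < up k)"
  shows "\<exists>t. (\<forall>i\<in>I. lo i \<le> t \<and> (sl i \<longrightarrow> lo i < t)) \<and>
             (\<forall>k\<in>K. t \<le> up k \<and> (su k \<longrightarrow> t < up k))"
proof (cases "I = {} \<or> K = {}")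
  case True
  define t where "t = (if I = {} then (if K = {} then 0 else Min (up ` K) - 1) else Max (lo ` I) + 1)"
  have "t < up k" if "I = {}" "k \<in> K" for k
  proof -
    have "Min (up ` K) \<le> up k" using assms(2) that(2) by (intro Min_le) auto
    then show ?thesis using that by (auto simp: t_def)
  qed
  moreover have "lo i < t" if "K = {}" "i \<in> I" for i
  proof -
    have "lo i \<le> Max (lo ` I)" using assms(1) that(2) by (intro Max_ge) auto
    then show ?thesis using that True by (auto simp: t_def)
  qed
  ultimately show ?thesis
    using True by (intro exI[of _ t]) (auto simp: less_imp_le)
next
  case False
  define m where "m = Max (lo ` I)"
  define M where "M = Min (up ` K)"
  have "m \<in> lo ` I" "M \<in> up ` K"
    using False assms(1,2) unfolding m_def M_def by (auto intro!: Max_in Min_in)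
  then obtain i0 k0 where i0: "i0 \<in> I" "lo i0 = m" and k0: "k0 \<in> K" "up k0 = M" by auto
  have lo_le: "lo i \<le> m" if "i \<in> I" for i unfolding m_def using assms(1) that by simp
  have up_ge: "M \<le> up k" if "k \<in> K" for k unfolding M_def using assms(2) that by simp
  show ?thesis
  proof (cases "m < M")
    case True
    show ?thesis
      using lo_le up_ge True by (intro exI[of _ "(m + M) / 2"]) fastforce
  next
    case False
    then have "m = M" using compat[OF i0(1) k0(1)] i0 k0 by simp
    then show ?thesis
      using compat[OF _ k0(1)] compat[OF i0(1)] i0 k0 by (intro exI[of _ m]) auto
  qed
qed

lemma lift_fm_elim:
  assumes "finite S" "\<forall>r\<in>fm_elim j S. sat r x y"
  shows "\<exists>t. \<forall>r\<in>S. sat r x (shift y j t)"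
proof -
  let ?lower = "{n \<in> S. ycoef n $ j < 0}" and ?upper = "{p \<in> S. ycoef p $ j > 0}"
  let ?bd = "\<lambda>r. bound r x y j"
  have "?bd n \<le> ?bd p \<and> (strict n \<or> strict p \<longrightarrow> ?bd n < ?bd p)"
    if "n \<in> ?lower" "p \<in> ?upper" for n p
  proof (rule fm_comb_bounds)
    have "fm_comb j p n \<in> fm_elim j S" using that unfolding fm_elim_def by force
    then show "sat (fm_comb j p n) x y" using assms(2) by blast
  qed (use that in auto)
  then obtain t where
    t_lower: "\<forall>n\<in>?lower. ?bd n \<le> t \<and> (strict n \<longrightarrow> ?bd n < t)" and
    t_upper: "\<forall>p\<in>?upper. t \<le> ?bd p \<and> (strict p \<longrightarrow> t < ?bd p)"
    using interval_choice[of ?lower ?upper ?bd ?bd strict strict] assms(1) by auto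
  have "sat r x (shift y j t)" if r: "r \<in> S" for r
  proof (cases "ycoef r $ j" "0 :: real" rule: linorder_cases)
    case less then show ?thesis using t_lower r by (simp add: sat_shift_lower)
  next
    case equal
    then have "r \<in> fm_elim j S" using r unfolding fm_elim_def by auto
    then show ?thesis using equal assms(2) by (simp add: sat_shift_free)
  next
    case greater then show ?thesis using t_upper r by (simp add: sat_shift_upper)
  qed
  then show ?thesis by blast
qed

lemma fm_elim_projection:
  assumes "finite S"
  shows "(\<exists>y. \<forall>r\<in>S. sat r x y) \<longleftrightarrow> (\<exists>y. \<forall>r\<in>fm_elim j S. sat r x y)"
  using sat_fm_elim lift_fm_elim[OF assms] by blast

lemma fm_eliminate_coords:
  fixes J :: "'q::finite set" and S :: "('p::finite, 'q) lincon set"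
  assumes "finite J" "finite S" "\<forall>r\<in>S. rational_con r" "\<forall>r\<in>S. \<forall>i. i \<notin> J \<longrightarrow> ycoef r $ i = 0"
  shows "\<exists>S' :: ('p, 'q) lincon set. finite S' \<and> (\<forall>r\<in>S'. rational_con r) \<and> (\<forall>r\<in>S'. ycoef r = 0) \<and>
           (\<forall>x. (\<exists>y. \<forall>r\<in>S. sat r x y) \<longleftrightarrow> (\<exists>y. \<forall>r\<in>S'. sat r x y))"
  using assms(1-4)
proof (induction J arbitrary: S rule: finite_induct)
  case empty
  then show ?case by (intro exI[of _ S]) (auto simp: vec_eq_iff)
next
  case (insert j J)
  have support: "\<forall>r\<in>fm_elim j S. \<forall>i. i \<notin> J \<longrightarrow> ycoef r $ i = 0"
  proof (intro ballI allI impI)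
    fix r i assume r: "r \<in> fm_elim j S" and "i \<notin> J"
    then have "\<forall>r\<in>S. ycoef r $ i = 0 \<or> i = j" using insert.prems(3) by auto
    then show "ycoef r $ i = 0" using r by (rule ycoef_fm_elim)
  qed
  from insert.IH[OF finite_fm_elim[OF insert.prems(1)] rational_fm_elim[OF insert.prems(2)] support]
  obtain S' :: "('p, 'q) lincon set" where S': "finite S'" "\<forall>r\<in>S'. rational_con r"
      "\<forall>r\<in>S'. ycoef r = 0" "\<forall>x. (\<exists>y. \<forall>r\<in>fm_elim j S. sat r x y) \<longleftrightarrow> (\<exists>y. \<forall>r\<in>S'. sat r x y)"
    by iprover
  have "(\<exists>y. \<forall>r\<in>S. sat r x y) \<longleftrightarrow> (\<exists>y. \<forall>r\<in>S'. sat r x y)" for x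
    using fm_elim_projection[OF insert.prems(1), of x j] S'(4) by simp
  then show ?case by (intro exI[of _ S'] conjI allI S'(1-3))
qed

theorem fourier_motzkin:
  fixes S :: "('p::finite, 'q::finite) lincon set"
  assumes "finite S" "\<forall>r\<in>S. rational_con r"
  shows "\<exists>S' :: ('p, 'q) lincon set. finite S' \<and> (\<forall>r\<in>S'. rational_con r) \<and>
           (\<forall>x. (\<exists>y. \<forall>r\<in>S. sat r x y) \<longleftrightarrow> (\<forall>r\<in>S'. sat r x 0))"
proof -
  have "\<forall>r\<in>S. \<forall>i. i \<notin> UNIV \<longrightarrow> ycoef r $ i = 0" by simp
  from fm_eliminate_coords[OF finite assms this]
  obtain S' :: "('p, 'q) lincon set" where S': "finite S'" "\<forall>r\<in>S'. rational_con r" "\<forall>r\<in>S'. ycoef r = 0"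
      "\<forall>x. (\<exists>y. \<forall>r\<in>S. sat r x y) \<longleftrightarrow> (\<exists>y. \<forall>r\<in>S'. sat r x y)"
    by iprover
  have y_free: "sat r x y \<longleftrightarrow> sat r x 0" if "r \<in> S'" for r x y
    using S'(3) that by (simp add: sat_def lhs_def)
  have "(\<exists>y. \<forall>r\<in>S'. sat r x y) \<longleftrightarrow> (\<forall>r\<in>S'. sat r x 0)" for x
    using y_free by blast
  then show ?thesis using S'(4) by (intro exI[of _ S'] conjI allI S'(1,2)) simp
qed

section \<open>Integral rounding of a rational inequality\<close>

lemma common_denominator:
  assumes "finite F" "F \<subseteq> \<rat>"
  shows "\<exists>N::nat. N > 0 \<and> (\<forall>q\<in>F. real N * q \<in> \<int>)"
  using assms
proof (induction F rule: finite_induct)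
  case empty
  show ?case by (intro exI[of _ 1]) simp
next
  case (insert q F)
  obtain N :: nat where N: "N > 0" "\<forall>q\<in>F. real N * q \<in> \<int>" using insert by auto
  obtain r where r: "q = of_rat r" using insert.prems by (auto elim: Rats_cases)
  obtain n d where nd: "quotient_of r = (n, d)" by fastforce
  have d: "d > 0" using quotient_of_denom_pos[OF nd] .
  have qd: "real_of_int d * q = real_of_int n"
    using quotient_of_div[OF nd] d r by (simp add: of_rat_divide)
  have scaled: "real (N * nat d) * q' \<in> \<int>" if "q' \<in> insert q F" for q'
  proof (cases "q' = q")
    case True
    have "real (N * nat d) * q' = real N * (real_of_int d * q)" using d True by simp
    also have "\<dots> = of_int (int N * n)" using qd by simp
    finally show ?thesis by (simp only: Ints_of_int)
  next
    case False
    then have "real N * q' \<in> \<int>" using N that by blast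
    moreover have "real (N * nat d) * q' = real (nat d) * (real N * q')" by simp
    ultimately show ?thesis by (simp only: Ints_mult Ints_of_nat)
  qed
  moreover have "N * nat d > 0" using N(1) d by simp
  ultimately show ?case by blast
qed

lemma int_inner:
  fixes a x :: "real^'n::finite"
  assumes "int_vec a" "int_vec x"
  shows "a \<bullet> x \<in> \<int>"
  using assms unfolding int_vec_def inner_vec_def by (auto intro!: Ints_sum Ints_mult)

lemma Ints_less_imp_add_one_le:
  fixes u v :: real
  assumes "u \<in> \<int>" "v \<in> \<int>" "v < u"
  shows "v + 1 \<le> u"
  using assms by (auto elim!: Ints_cases simp flip: of_int_add)

lemma integral_separation:
  fixes a :: "real^'p::finite"
  assumes "rat_vec a" "c \<in> \<rat>"
  shows "\<exists>D \<Delta>. int_vec D \<and> \<Delta> \<in> \<int> \<and>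
     (\<forall>x. a \<bullet> x \<le> c \<and> (s \<longrightarrow> a \<bullet> x < c) \<longrightarrow> D \<bullet> x > \<Delta>) \<and>
     (\<forall>x. int_vec x \<and> \<not> (a \<bullet> x \<le> c \<and> (s \<longrightarrow> a \<bullet> x < c)) \<longrightarrow> D \<bullet> x \<le> \<Delta>)"
proof -
  have "finite (insert c (range (($) a)))" "insert c (range (($) a)) \<subseteq> \<rat>"
    using assms by (auto simp: rat_vec_def)
  then obtain N :: nat where N: "N > 0" "\<forall>q\<in>insert c (range (($) a)). real N * q \<in> \<int>"
    using common_denominator by blast
  define a' where "a' = real N *\<^sub>R a"
  define c' where "c' = real N * c"
  have int_a': "int_vec (- a')" and int_c': "c' \<in> \<int>"
    using N(2) by (auto simp: a'_def c'_def int_vec_def)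
  have scale: "a \<bullet> x < c \<longleftrightarrow> a' \<bullet> x < c'" "a \<bullet> x \<le> c \<longleftrightarrow> a' \<bullet> x \<le> c'" for x
    using N(1) by (simp_all add: a'_def c'_def)
  show ?thesis
  proof (cases s)
    case True
    show ?thesis
    proof (intro exI[of _ "- a'"] exI[of _ "- c'"] conjI allI impI)
      fix x
      show "- a' \<bullet> x > - c'" if "a \<bullet> x \<le> c \<and> (s \<longrightarrow> a \<bullet> x < c)"
        using that True scale(1)[of x] by simp
      show "- a' \<bullet> x \<le> - c'" if "int_vec x \<and> \<not> (a \<bullet> x \<le> c \<and> (s \<longrightarrow> a \<bullet> x < c))"
        using that True scale[of x] by auto
    qed (use int_a' int_c' in simp_all)
  next
    case False
    show ?thesis
    proof (intro exI[of _ "- a'"] exI[of _ "- c' - 1"] conjI allI impI)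
      fix x
      show "- a' \<bullet> x > - c' - 1" if "a \<bullet> x \<le> c \<and> (s \<longrightarrow> a \<bullet> x < c)"
        using that scale(2)[of x] by simp
      assume "int_vec x \<and> \<not> (a \<bullet> x \<le> c \<and> (s \<longrightarrow> a \<bullet> x < c))"
      then have "int_vec x" and less: "c' < a' \<bullet> x" using False scale(2)[of x] by auto
      then have "a' \<bullet> x \<in> \<int>" using int_inner[OF int_a'] by simp
      then show "- a' \<bullet> x \<le> - c' - 1"
        using Ints_less_imp_add_one_le[OF _ int_c' less] by simp
    qed (use int_a' int_c' in simp_all)
  qed
qed

section \<open>From an integer-free system to a disjunction\<close>

definition splits :: "('p::finite, 'q::finite) lincon \<Rightarrow> real^'p \<Rightarrow> real \<Rightarrow> bool" where
  "splits r D \<Delta> \<longleftrightarrow> int_vec D \<and> \<Delta> \<in> \<int> \<and> (\<forall>x. sat r x 0 \<longrightarrow> D \<bullet> x > \<Delta>) \<and>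
     (\<forall>x. int_vec x \<and> \<not> sat r x 0 \<longrightarrow> D \<bullet> x \<le> \<Delta>)"

lemma rational_con_splits:
  assumes "rational_con r"
  shows "\<exists>D \<Delta>. splits r D \<Delta>"
proof -
  have "rat_vec (xcoef r)" "rhs r \<in> \<rat>" using assms by (simp_all add: rational_con_def)
  from integral_separation[OF this, of "strict r"] show ?thesis
    unfolding splits_def sat_def lhs_def by simp
qed

text \<open>The
  terms are the splitting inequalities of the constraints, listed cyclically.\<close>
lemma disjunction_of_integer_free_system:
  fixes S :: "('p::finite, 'q::finite) lincon set"
  assumes "finite S" "\<forall>r\<in>S. rational_con r"
    and integer_free: "\<And>x. int_vec x \<Longrightarrow> \<exists>r\<in>S. \<not> sat r x 0"
  shows "\<exists>k\<ge>2. \<exists>d \<delta>. k_disjunction k d \<delta> \<and> (\<forall>x. (\<forall>r\<in>S. sat r x 0) \<longrightarrow> (\<forall>i<k. d i \<bullet> x > \<delta> i))"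
proof -
  have "\<forall>r\<in>S. \<exists>D \<Delta>. splits r D \<Delta>" using assms(2) rational_con_splits by blast
  then obtain D where "\<forall>r\<in>S. \<exists>\<Delta>. splits r (D r) \<Delta>" using bchoice by meson
  then obtain \<Delta> where split: "\<forall>r\<in>S. splits r (D r) (\<Delta> r)" using bchoice by meson
  obtain rs where rs: "set rs = S" using finite_list[OF assms(1)] by blast
  have "rs \<noteq> []" using integer_free[of 0] rs by (auto simp: int_vec_def)
  define k where "k = length rs + 1"
  define d where "d i = D (rs ! (i mod length rs))" for i
  define \<delta> where "\<delta> i = \<Delta> (rs ! (i mod length rs))" for i
  have in_S: "rs ! (i mod length rs) \<in> S" for i
    using rs \<open>rs \<noteq> []\<close> by (metis length_greater_0_conv mod_less_divisor nth_mem)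
  have split_i: "splits (rs ! (i mod length rs)) (d i) (\<delta> i)" for i
    using split in_S by (simp add: d_def \<delta>_def)
  have "k_disjunction k d \<delta>"
    unfolding k_disjunction_def
  proof (intro conjI allI impI)
    show "2 \<le> k" using \<open>rs \<noteq> []\<close> by (simp add: k_def Suc_le_eq)
    show "int_vec (d i)" "\<delta> i \<in> \<int>" for i using split_i[of i] by (simp_all add: splits_def)
  next
    fix x :: "real^'p" assume "int_vec x"
    then obtain r where "r \<in> set rs" "\<not> sat r x 0" using integer_free rs by blast
    then obtain i where "i < length rs" "\<not> sat (rs ! i) x 0" by (metis in_set_conv_nth)
    then have "d i \<bullet> x \<le> \<delta> i" using split_i[of i] \<open>int_vec x\<close> by (simp add: splits_def)
    then show "\<exists>i<k. d i \<bullet> x \<le> \<delta> i" using \<open>i < length rs\<close> by (intro exI[of _ i]) (simp add: k_def)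
  qed
  moreover have "d i \<bullet> x > \<delta> i" if "\<forall>r\<in>S. sat r x 0" for i x
    using split_i[of i] in_S[of i] that by (simp add: splits_def)
  moreover have "k \<ge> 2" using \<open>rs \<noteq> []\<close> by (simp add: k_def Suc_le_eq)
  ultimately show ?thesis by blast
qed

definition cut_violation_system ::
  "real^'p::finite^'m::finite \<Rightarrow> real^'q::finite^'m \<Rightarrow> real^'m \<Rightarrow> real^'p \<Rightarrow> real^'q \<Rightarrow> real
     \<Rightarrow> ('p, 'q) lincon set" where
  "cut_violation_system A G b \<alpha> \<beta> \<gamma> =
     insert (LinCon (- \<alpha>) (- \<beta>) (- \<gamma>) True) (range (\<lambda>i. LinCon (A $ i) (G $ i) (b $ i) False))"

lemma matrix_vector_mult_row: "(A *v x) $ i = A $ i \<bullet> x"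
  by (simp add: matrix_vector_mult_def inner_vec_def)

lemma sat_cut_violation_system:
  "(\<forall>r\<in>cut_violation_system A G b \<alpha> \<beta> \<gamma>. sat r x y) \<longleftrightarrow>
     (x, y) \<in> polyhedron A G b \<and> \<alpha> \<bullet> x + \<beta> \<bullet> y > \<gamma>"
  by (auto simp: cut_violation_system_def polyhedron_def sat_def lhs_def matrix_vector_mult_row)

lemma rational_cut_violation_system:
  assumes "rat_mat A" "rat_mat G" "rat_vec b" "rat_vec \<alpha>" "rat_vec \<beta>" "\<gamma> \<in> \<rat>"
  shows "\<forall>r\<in>cut_violation_system A G b \<alpha> \<beta> \<gamma>. rational_con r"
  using assms
  by (auto simp: cut_violation_system_def rational_con_def rat_mat_def rat_vec_def)

theorem lemma2p5:
  fixes A :: "real^'p^'m" and G :: "real^'q^'m" and b :: "real^'m"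
    and \<alpha> :: "real^'p" and \<beta> :: "real^'q" and \<gamma> :: real
  assumes "rat_mat A" and "rat_mat G" and "rat_vec b"
    and "rat_vec \<alpha>" and "rat_vec \<beta>" and "\<gamma> \<in> \<rat>"
    and "valid_ineq (mixed_integer_hull (polyhedron A G b)) \<alpha> \<beta> \<gamma>"
    and "\<not> valid_ineq (polyhedron A G b) \<alpha> \<beta> \<gamma>"
  shows "\<exists>k\<ge>2. k_disjunctive_cut k (polyhedron A G b) \<alpha> \<beta> \<gamma>"
proof -
  let ?P = "polyhedron A G b" and ?S = "cut_violation_system A G b \<alpha> \<beta> \<gamma>"
  have "finite ?S" by (simp add: cut_violation_system_def)
  from fourier_motzkin[OF this rational_cut_violation_system[OF assms(1-6)]]
  obtain S' :: "('p, 'q) lincon set" where S': "finite S'" "\<forall>r\<in>S'. rational_con r"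
    and eliminated: "\<forall>x. (\<exists>y. \<forall>r\<in>?S. sat r x y) \<longleftrightarrow> (\<forall>r\<in>S'. sat r x 0)"
    by iprover
  have projection: "(\<exists>y. (x, y) \<in> ?P \<and> \<alpha> \<bullet> x + \<beta> \<bullet> y > \<gamma>) \<longleftrightarrow> (\<forall>r\<in>S'. sat r x 0)" for x
    using eliminated unfolding sat_cut_violation_system by blast
  text \<open>Points of \<open>P\<close> with integral x lie in \<open>P_I\<close> and hence satisfy the cut.\<close>
  have "\<exists>r\<in>S'. \<not> sat r x 0" if "int_vec x" for x
  proof (rule ccontr)
    assume "\<not> ?thesis"
    then obtain y where "(x, y) \<in> ?P" "\<alpha> \<bullet> x + \<beta> \<bullet> y > \<gamma>" using projection by blast
    moreover have "(x, y) \<in> mixed_integer_hull ?P" if "(x, y) \<in> ?P"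
      using that \<open>int_vec x\<close> unfolding mixed_integer_hull_def by (auto intro: hull_inc)
    ultimately show False using assms(7) by (auto simp: valid_ineq_def)
  qed
  then obtain k d \<delta> where "k \<ge> 2" "k_disjunction k d \<delta>"
      and terms_violated: "\<forall>x. (\<forall>r\<in>S'. sat r x 0) \<longrightarrow> (\<forall>i<k. d i \<bullet> x > \<delta> i)"
    using disjunction_of_integer_free_system[OF S'] by blast
  moreover have "\<forall>(x, y)\<in>?P. \<alpha> \<bullet> x + \<beta> \<bullet> y > \<gamma> \<longrightarrow> (\<forall>i<k. d i \<bullet> x > \<delta> i)"
    using terms_violated projection by blast
  ultimately show ?thesis using assms(8) unfolding k_disjunctive_cut_def by blast
qed

end
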